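(* Let $C$ be a linear code over $\mathbb{Z}_4+u\mathbb{Z}_4$ generated by a matrix of the form $[I_n\,|\,A]$, where $A$ is an $n\times n$ matrix over $\mathbb{Z}_4+u\mathbb{Z}_4$. If $A$ is symmetric or circulant, then $C$ is formally self-dual, and hence $\phi(C)$ is a formally self-dual code over $\mathbb{Z}_4$ of length $4n$.
   Context: $\mathbb{Z}_4+u\mathbb{Z}_4$ is the commutative ring of characteristic $4$ with $u^2=0$. A linear code over a ring $R$ is an $R$-submodule of $R^N$; duals are taken with respect to the Euclidean inner product $\sum_i x_iy_i$ in $R$. Lee weight on $\mathbb{Z}_4$: $0,1,2,1$ for $0,1,2,3$; on $\mathbb{Z}_4+u\mathbb{Z}_4$: $w_L(a+ub)=w_L(b)+w_L(a+b)$; extended additively to vectors. A linear code (over either ring) is formally self-dual if it has the same Lee weight enumerator as its dual. The Gray map $\phi:(\mathbb{Z}_4+u\mathbb{Z}_4)^{N}\to\mathbb{Z}_4^{2N}$ is $\phi(\overline{a}+u\overline{b})=(\overline{b},\overline{a}+\overline{b})$ for $\overline{a},\overline{b}\in\mathbb{Z}_4^N$. A circulant matrix is one in which each row is the cyclic right shift of the previous row. *)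

theory Defs
  imports Main "HOL-Library.Numeral_Type" "HOL-Library.Product_Plus"
begin

text \<open>Z4 is the type 4 (integers mod 4). An element a + u b of Z4 + uZ4 is
represented by the pair (a, b) :: 4 \<times> 4; addition is componentwise
(Product_Plus), multiplication uses u^2 = 0.\<close>

type_synonym R = "4 \<times> 4"

definition rmul :: "R \<Rightarrow> R \<Rightarrow> R" where
  "rmul x y = (fst x * fst y, fst x * snd y + snd x * fst y)"

definition linear_code_R :: "nat \<Rightarrow> R list set \<Rightarrow> bool" where
  "linear_code_R N C \<longleftrightarrow> C \<subseteq> {v. length v = N} \<and> C \<noteq> {} \<and>
     (\<forall>x\<in>C. \<forall>y\<in>C. map2 (+) x y \<in> C) \<and>
     (\<forall>r. \<forall>x\<in>C. map (rmul r) x \<in> C)"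

definition linear_code_Z4 :: "nat \<Rightarrow> 4 list set \<Rightarrow> bool" where
  "linear_code_Z4 N C \<longleftrightarrow> C \<subseteq> {v. length v = N} \<and> C \<noteq> {} \<and>
     (\<forall>x\<in>C. \<forall>y\<in>C. map2 (+) x y \<in> C) \<and>
     (\<forall>r. \<forall>x\<in>C. map ((*) r) x \<in> C)"

definition dual_R :: "nat \<Rightarrow> R list set \<Rightarrow> R list set" where
  "dual_R N C = {y. length y = N \<and> (\<forall>x\<in>C. sum_list (map2 rmul x y) = 0)}"

definition dual_Z4 :: "nat \<Rightarrow> 4 list set \<Rightarrow> 4 list set" where
  "dual_Z4 N C = {y. length y = N \<and> (\<forall>x\<in>C. sum_list (map2 (*) x y) = 0)}"

definition lee_Z4 :: "4 \<Rightarrow> nat" where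
  "lee_Z4 x = (if x = 0 then 0 else if x = 2 then 2 else 1)"

definition lee_R :: "R \<Rightarrow> nat" where
  "lee_R x = lee_Z4 (snd x) + lee_Z4 (fst x + snd x)"

definition lee_wt_R :: "R list \<Rightarrow> nat" where
  "lee_wt_R v = sum_list (map lee_R v)"

definition lee_wt_Z4 :: "4 list \<Rightarrow> nat" where
  "lee_wt_Z4 v = sum_list (map lee_Z4 v)"

definition formally_self_dual_R :: "nat \<Rightarrow> R list set \<Rightarrow> bool" where
  "formally_self_dual_R N C \<longleftrightarrow> linear_code_R N C \<and>
     (\<forall>w. card {c\<in>C. lee_wt_R c = w} = card {c\<in>dual_R N C. lee_wt_R c = w})"

definition formally_self_dual_Z4 :: "nat \<Rightarrow> 4 list set \<Rightarrow> bool" where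
  "formally_self_dual_Z4 N C \<longleftrightarrow> linear_code_Z4 N C \<and>
     (\<forall>w. card {c\<in>C. lee_wt_Z4 c = w} = card {c\<in>dual_Z4 N C. lee_wt_Z4 c = w})"

definition gray :: "R list \<Rightarrow> 4 list" where
  "gray v = map snd v @ map (\<lambda>x. fst x + snd x) v"

definition generated_code_R :: "nat \<Rightarrow> nat \<Rightarrow> (nat \<Rightarrow> nat \<Rightarrow> R) \<Rightarrow> R list set" where
  "generated_code_R k N G =
     {map (\<lambda>j. \<Sum>i<k. rmul (x i) (G i j)) [0..<N] | x. True}"

definition id_concat :: "nat \<Rightarrow> (nat \<Rightarrow> nat \<Rightarrow> R) \<Rightarrow> nat \<Rightarrow> nat \<Rightarrow> R" where
  "id_concat n A i j = (if j < n then (if i = j then (1, 0) else 0) else A i (j - n))"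

definition symmetric_mat :: "nat \<Rightarrow> (nat \<Rightarrow> nat \<Rightarrow> R) \<Rightarrow> bool" where
  "symmetric_mat n A \<longleftrightarrow> (\<forall>i<n. \<forall>j<n. A i j = A j i)"

definition circulant_mat :: "nat \<Rightarrow> (nat \<Rightarrow> nat \<Rightarrow> R) \<Rightarrow> bool" where
  "circulant_mat n A \<longleftrightarrow> (\<forall>i j. i + 1 < n \<and> j < n \<longrightarrow> A (i + 1) ((j + 1) mod n) = A i j)"

end

theory Submission
  imports Defs
begin

text \<open>Codewords of C are the vectors (x, xA), and its dual consists of the vectors (-Ay, y).
Both hypotheses provide an involution \<pi> of the index set with A (\<pi> i) (\<pi> j) = A j i
(the identity, resp. i \<mapsto> -i mod n); then (x, xA) \<mapsto> (-(xA)\<circ>\<pi>, x\<circ>\<pi>) is a signed coordinate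
permutation mapping C onto its dual, hence it preserves Lee weights. For the Gray image, the
dual of \<phi>(C) is the image of the dual of C under the twisted Gray map a + ub \<mapsto> (-b, a + b),
which is a Lee isometry as well.\<close>

lemma Z4_cases: "(x::4) = 0 \<or> x = 1 \<or> x = 2 \<or> x = 3"
proof (cases x)
  case (of_int z)
  then have "z = 0 \<or> z = 1 \<or> z = 2 \<or> z = 3" by auto
  then show ?thesis using of_int by auto
qed

lemma lee_Z4_uminus [simp]: "lee_Z4 (- x) = lee_Z4 x"
  using Z4_cases[of x] by (auto simp: lee_Z4_def)

lemma lee_R_uminus [simp]: "lee_R (- x) = lee_R x"
  unfolding lee_R_def fst_uminus snd_uminus minus_add_distrib[symmetric] lee_Z4_uminus ..

lemma rmul_commute: "rmul x y = rmul y x"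
  by (simp add: rmul_def algebra_simps)

lemma rmul_assoc: "rmul (rmul x y) z = rmul x (rmul y z)"
  by (simp add: rmul_def algebra_simps)

lemma rmul_add_left: "rmul (x + y) z = rmul x z + rmul y z"
  by (simp add: rmul_def algebra_simps)

lemma rmul_add_right: "rmul z (x + y) = rmul z x + rmul z y"
  by (simp add: rmul_def algebra_simps)

lemma rmul_zero_left [simp]: "rmul 0 x = 0"
  by (simp add: rmul_def prod_eq_iff)

lemma rmul_zero_right [simp]: "rmul x 0 = 0"
  by (simp add: rmul_def prod_eq_iff)

lemma rmul_one_left [simp]: "rmul (1, 0) x = x"
  by (simp add: rmul_def prod_eq_iff)

lemma rmul_one_right [simp]: "rmul x (1, 0) = x"
  by (simp add: rmul_def prod_eq_iff)

lemma rmul_u_left: "rmul (0, 1) x = (0, fst x)"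
  by (simp add: rmul_def)

lemma rmul_sum_left: "rmul (sum f S) r = (\<Sum>i\<in>S. rmul (f i) r)"
  by (induct S rule: infinite_finite_induct) (auto simp: rmul_add_left)

lemma rmul_sum_right: "rmul r (sum f S) = (\<Sum>i\<in>S. rmul r (f i))"
  using rmul_sum_left[of f S r] by (simp add: rmul_commute)

lemma sum_lessThan_double: "(\<Sum>j<2 * n. g j) = (\<Sum>i<n. g i) + (\<Sum>i<n. g (n + i :: nat))"
  using sum.atLeastLessThan_concat[of 0 n "n + n" g] sum.shift_bounds_nat_ivl[of g 0 n n]
  by (simp add: mult_2 atLeast0LessThan add.commute)

lemma sum_list_map2_eq_sum:
  "length xs = length ys \<Longrightarrow> sum_list (map2 f xs ys) = (\<Sum>i<length xs. f (xs ! i) (ys ! i))"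
  by (simp add: sum_list_sum_nth atLeast0LessThan)

lemma sum_reindex_involution:
  "\<forall>i<n. \<pi> i < n \<and> \<pi> (\<pi> i) = i \<Longrightarrow> (\<Sum>i<n. g (\<pi> i)) = (\<Sum>i<n. g i)"
  by (rule sum.reindex_bij_witness[where i=\<pi> and j=\<pi>]) auto

lemma card_weight_class_bij:
  assumes "bij_betw h C D" and "\<And>c. c \<in> C \<Longrightarrow> wt' (h c) = wt c"
  shows "card {c \<in> C. wt c = w} = card {d \<in> D. wt' d = w}"
proof (rule bij_betw_same_card)
  show "bij_betw h {c \<in> C. wt c = w} {d \<in> D. wt' d = w}"
    using assms unfolding bij_betw_def by (auto intro: inj_on_subset)
qed

lemma linear_code_generated: "linear_code_R N (generated_code_R k N G)"
proof -
  let ?word = "\<lambda>x. map (\<lambda>j. \<Sum>i<k. rmul (x i) (G i j)) [0..<N]"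
  have "map2 (+) (?word x) (?word y) = ?word (\<lambda>i. x i + y i)" for x y
    by (simp add: map2_map_map rmul_add_left sum.distrib)
  moreover have "map (rmul r) (?word x) = ?word (\<lambda>i. rmul r (x i))" for r x
    by (simp add: rmul_sum_right rmul_assoc)
  ultimately show ?thesis
    unfolding linear_code_R_def generated_code_R_def by auto
qed

definition systematic_code :: "nat \<Rightarrow> (nat \<Rightarrow> nat \<Rightarrow> R) \<Rightarrow> R list set" where
  "systematic_code n A =
     {v. length v = 2 * n \<and> (\<forall>k<n. v ! (n + k) = (\<Sum>i<n. rmul (v ! i) (A i k)))}"

definition systematic_dual :: "nat \<Rightarrow> (nat \<Rightarrow> nat \<Rightarrow> R) \<Rightarrow> R list set" where
  "systematic_dual n A =
     {v. length v = 2 * n \<and> (\<forall>i<n. v ! i = - (\<Sum>j<n. rmul (A i j) (v ! (n + j))))}"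

lemma nth_generated_id_concat:
  assumes "j < 2 * n"
  shows "map (\<lambda>j. \<Sum>i<n. rmul (x i) (id_concat n A i j)) [0..<2 * n] ! j =
           (if j < n then x j else \<Sum>i<n. rmul (x i) (A i (j - n)))"
proof -
  have "(\<Sum>i<n. rmul (x i) (id_concat n A i j)) = (\<Sum>i<n. if i = j then x i else 0)" if "j < n"
    using that by (intro sum.cong) (auto simp: id_concat_def)
  then show ?thesis
    using assms by (simp add: id_concat_def)
qed

lemma generated_id_concat: "generated_code_R n (2 * n) (id_concat n A) = systematic_code n A"
proof (intro equalityI subsetI)
  fix v assume "v \<in> generated_code_R n (2 * n) (id_concat n A)"
  then obtain x where v: "v = map (\<lambda>j. \<Sum>i<n. rmul (x i) (id_concat n A i j)) [0..<2 * n]"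
    unfolding generated_code_R_def by blast
  have "v ! j = (if j < n then x j else \<Sum>i<n. rmul (x i) (A i (j - n)))" if "j < 2 * n" for j
    unfolding v by (rule nth_generated_id_concat[OF that])
  then show "v \<in> systematic_code n A"
    by (auto simp: systematic_code_def v[THEN arg_cong[of _ _ length]] intro!: sum.cong)
next
  fix v assume v: "v \<in> systematic_code n A"
  have "map (\<lambda>j. \<Sum>i<n. rmul (v ! i) (id_concat n A i j)) [0..<2 * n] = v"
  proof (rule nth_equalityI)
    fix j assume "j < length (map (\<lambda>j. \<Sum>i<n. rmul (v ! i) (id_concat n A i j)) [0..<2 * n])"
    then have "j < 2 * n" by simp
    with v show "map (\<lambda>j. \<Sum>i<n. rmul (v ! i) (id_concat n A i j)) [0..<2 * n] ! j = v ! j"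
      unfolding nth_generated_id_concat[OF \<open>j < 2 * n\<close>] systematic_code_def
      by (auto dest: spec[of _ "j - n"])
  qed (use v in \<open>simp add: systematic_code_def\<close>)
  then show "v \<in> generated_code_R n (2 * n) (id_concat n A)"
    unfolding generated_code_R_def by (auto intro!: exI[of _ "\<lambda>i. v ! i"])
qed

lemma inner_systematic_code:
  assumes v: "v \<in> systematic_code n A" and y: "length y = 2 * n"
  shows "sum_list (map2 rmul v y) =
           (\<Sum>i<n. rmul (v ! i) (y ! i + (\<Sum>j<n. rmul (A i j) (y ! (n + j)))))"
proof -
  have "sum_list (map2 rmul v y) =
          (\<Sum>i<n. rmul (v ! i) (y ! i)) + (\<Sum>j<n. rmul (v ! (n + j)) (y ! (n + j)))"
    using v y by (simp add: systematic_code_def sum_list_map2_eq_sum sum_lessThan_double)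
  also have "(\<Sum>j<n. rmul (v ! (n + j)) (y ! (n + j))) =
               (\<Sum>i<n. rmul (v ! i) (\<Sum>j<n. rmul (A i j) (y ! (n + j))))"
  proof -
    have "(\<Sum>j<n. rmul (v ! (n + j)) (y ! (n + j))) =
            (\<Sum>j<n. \<Sum>i<n. rmul (v ! i) (rmul (A i j) (y ! (n + j))))"
      using v by (simp add: systematic_code_def rmul_sum_left rmul_assoc)
    then show ?thesis
      by (simp only: rmul_sum_right) (rule sum.swap)
  qed
  finally show ?thesis
    by (simp add: rmul_add_right sum.distrib)
qed

lemma dual_systematic_code: "dual_R (2 * n) (systematic_code n A) = systematic_dual n A"
proof (intro equalityI subsetI)
  fix y assume "y \<in> dual_R (2 * n) (systematic_code n A)"
  then have y: "length y = 2 * n"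
    and orth: "\<And>v. v \<in> systematic_code n A \<Longrightarrow> sum_list (map2 rmul v y) = 0"
    by (auto simp: dual_R_def)
  have "y ! i0 + (\<Sum>j<n. rmul (A i0 j) (y ! (n + j))) = 0" if "i0 < n" for i0
  proof -
    let ?F = "\<lambda>i. y ! i + (\<Sum>j<n. rmul (A i j) (y ! (n + j)))"
    define x where "x i = (if i = i0 then (1, 0) else 0 :: R)" for i
    define v where "v = map (\<lambda>j. \<Sum>i<n. rmul (x i) (id_concat n A i j)) [0..<2 * n]"
    have v: "v \<in> systematic_code n A"
      unfolding v_def generated_id_concat[symmetric] generated_code_R_def by blast
    have "v ! i = x i" if "i < n" for i
      using that nth_generated_id_concat[of i n x A] unfolding v_def[symmetric] by simp
    then have "0 = (\<Sum>i<n. rmul (x i) (?F i))"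
      using orth[OF v] inner_systematic_code[OF v y] by simp
    also have "\<dots> = (\<Sum>i<n. if i = i0 then ?F i else 0)"
      by (rule sum.cong) (simp_all add: x_def)
    also have "\<dots> = ?F i0"
      using that by simp
    finally show ?thesis ..
  qed
  with y show "y \<in> systematic_dual n A"
    by (simp add: systematic_dual_def eq_neg_iff_add_eq_0)
next
  fix y assume "y \<in> systematic_dual n A"
  then show "y \<in> dual_R (2 * n) (systematic_code n A)"
    by (simp add: systematic_dual_def dual_R_def inner_systematic_code)
qed

definition transposed_by_involution :: "nat \<Rightarrow> (nat \<Rightarrow> nat \<Rightarrow> R) \<Rightarrow> (nat \<Rightarrow> nat) \<Rightarrow> bool" where
  "transposed_by_involution n A \<pi> \<longleftrightarrow>
     (\<forall>i<n. \<pi> i < n \<and> \<pi> (\<pi> i) = i) \<and> (\<forall>i<n. \<forall>j<n. A (\<pi> i) (\<pi> j) = A j i)"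

lemma transposed_by_involutionD:
  assumes "transposed_by_involution n A \<pi>"
  shows "\<forall>i<n. \<pi> i < n \<and> \<pi> (\<pi> i) = i" and "\<And>i j. i < n \<Longrightarrow> j < n \<Longrightarrow> A (\<pi> i) (\<pi> j) = A j i"
  using assms by (simp_all add: transposed_by_involution_def)

lemma sum_transposed:
  assumes "transposed_by_involution n A \<pi>" and "i < n"
  shows "(\<Sum>j<n. rmul (A i j) (y j)) = (\<Sum>k<n. rmul (y (\<pi> k)) (A k (\<pi> i)))"
proof -
  note \<pi> = transposed_by_involutionD(1)[OF assms(1)]
    and A = transposed_by_involutionD(2)[OF assms(1)]
  have "(\<Sum>j<n. rmul (A i j) (y j)) = (\<Sum>k<n. rmul (A i (\<pi> k)) (y (\<pi> k)))"
    by (rule sum_reindex_involution[OF \<pi>, symmetric])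
  also have "\<dots> = (\<Sum>k<n. rmul (y (\<pi> k)) (A k (\<pi> i)))"
  proof (rule sum.cong)
    fix k assume "k \<in> {..<n}"
    have "A i (\<pi> k) = A (\<pi> (\<pi> i)) (\<pi> k)" using \<pi> \<open>i < n\<close> by simp
    also have "\<dots> = A k (\<pi> i)"
      by (rule A) (use \<pi> \<open>i < n\<close> \<open>k \<in> {..<n}\<close> in auto)
    finally show "rmul (A i (\<pi> k)) (y (\<pi> k)) = rmul (y (\<pi> k)) (A k (\<pi> i))"
      by (simp add: rmul_commute)
  qed simp
  finally show ?thesis .
qed

definition dual_swap :: "nat \<Rightarrow> (nat \<Rightarrow> nat) \<Rightarrow> R list \<Rightarrow> R list" where
  "dual_swap n \<pi> v = map (\<lambda>i. - v ! (n + \<pi> i)) [0..<n] @ map (\<lambda>i. v ! \<pi> i) [0..<n]"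

lemma length_dual_swap [simp]: "length (dual_swap n \<pi> v) = 2 * n"
  by (simp add: dual_swap_def)

lemma nth_dual_swap:
  "i < n \<Longrightarrow> dual_swap n \<pi> v ! i = - v ! (n + \<pi> i)"
  "i < n \<Longrightarrow> dual_swap n \<pi> v ! (n + i) = v ! \<pi> i"
  by (simp_all add: dual_swap_def nth_append)

lemma lee_wt_R_halves:
  "length v = 2 * n \<Longrightarrow> lee_wt_R v = (\<Sum>i<n. lee_R (v ! i)) + (\<Sum>i<n. lee_R (v ! (n + i)))"
  by (simp add: lee_wt_R_def sum_list_sum_nth atLeast0LessThan sum_lessThan_double)

lemma lee_wt_dual_swap:
  assumes "\<forall>i<n. \<pi> i < n \<and> \<pi> (\<pi> i) = i" and "length v = 2 * n"
  shows "lee_wt_R (dual_swap n \<pi> v) = lee_wt_R v"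
proof -
  have "lee_wt_R (dual_swap n \<pi> v) = (\<Sum>i<n. lee_R (v ! (n + \<pi> i))) + (\<Sum>i<n. lee_R (v ! \<pi> i))"
    by (simp add: lee_wt_R_halves nth_dual_swap)
  also have "\<dots> = (\<Sum>i<n. lee_R (v ! (n + i))) + (\<Sum>i<n. lee_R (v ! i))"
    by (simp only: sum_reindex_involution[OF assms(1), of "\<lambda>i. lee_R (v ! (n + i))"]
        sum_reindex_involution[OF assms(1), of "\<lambda>i. lee_R (v ! i)"])
  also have "\<dots> = lee_wt_R v"
    using assms(2) by (simp add: lee_wt_R_halves)
  finally show ?thesis .
qed

lemma dual_swap_uminus:
  assumes "\<forall>i<n. \<pi> i < n" and "length v = 2 * n"
  shows "dual_swap n \<pi> (map uminus v) = map uminus (dual_swap n \<pi> v)"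
  using assms by (auto simp: dual_swap_def)

lemma dual_swap_dual_swap:
  assumes "\<forall>i<n. \<pi> i < n \<and> \<pi> (\<pi> i) = i" and "length v = 2 * n"
  shows "dual_swap n \<pi> (dual_swap n \<pi> v) = map uminus v"
  using assms by (intro nth_equalityI) (auto simp: nth_dual_swap dual_swap_def nth_append)

lemma dual_swap_systematic_code:
  assumes "transposed_by_involution n A \<pi>" and v: "v \<in> systematic_code n A"
  shows "dual_swap n \<pi> v \<in> systematic_dual n A"
proof -
  note \<pi> = transposed_by_involutionD(1)[OF assms(1)]
  have "dual_swap n \<pi> v ! i = - (\<Sum>j<n. rmul (A i j) (dual_swap n \<pi> v ! (n + j)))" if "i < n" for i
  proof -
    have "(\<Sum>j<n. rmul (A i j) (dual_swap n \<pi> v ! (n + j))) = (\<Sum>j<n. rmul (A i j) (v ! \<pi> j))"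
      by (simp add: nth_dual_swap)
    also have "\<dots> = (\<Sum>k<n. rmul (v ! \<pi> (\<pi> k)) (A k (\<pi> i)))"
      by (rule sum_transposed[OF assms(1) that])
    also have "\<dots> = v ! (n + \<pi> i)"
      using v \<pi> that by (simp add: systematic_code_def)
    finally show ?thesis
      using that by (simp add: nth_dual_swap)
  qed
  then show ?thesis
    by (simp add: systematic_dual_def)
qed

lemma dual_swap_systematic_dual:
  assumes "transposed_by_involution n A \<pi>" and v: "v \<in> systematic_dual n A"
  shows "dual_swap n \<pi> (map uminus v) \<in> systematic_code n A"
proof -
  note \<pi> = transposed_by_involutionD(1)[OF assms(1)]
  have "dual_swap n \<pi> (map uminus v) ! (n + k) =
          (\<Sum>i<n. rmul (dual_swap n \<pi> (map uminus v) ! i) (A i k))" if "k < n" for k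
  proof -
    have "\<pi> k < length v"
      using v \<pi> that by (auto simp: systematic_dual_def)
    then have "dual_swap n \<pi> (map uminus v) ! (n + k) = (\<Sum>j<n. rmul (A (\<pi> k) j) (v ! (n + j)))"
      using v \<pi> that by (simp add: nth_dual_swap systematic_dual_def)
    also have "\<dots> = (\<Sum>i<n. rmul (v ! (n + \<pi> i)) (A i (\<pi> (\<pi> k))))"
      using \<pi> that by (intro sum_transposed[OF assms(1)]) simp
    also have "\<dots> = (\<Sum>i<n. rmul (dual_swap n \<pi> (map uminus v) ! i) (A i k))"
      using v \<pi> that by (intro sum.cong) (simp_all add: nth_dual_swap systematic_dual_def)
    finally show ?thesis .
  qed
  then show ?thesis
    using v by (simp add: systematic_code_def systematic_dual_def)
qed

lemma bij_betw_dual_swap: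
  assumes "transposed_by_involution n A \<pi>"
  shows "bij_betw (dual_swap n \<pi>) (systematic_code n A) (systematic_dual n A)"
proof (rule bij_betw_byWitness[where f'="\<lambda>v. dual_swap n \<pi> (map uminus v)"])
  note \<pi> = transposed_by_involutionD(1)[OF assms]
  show "\<forall>v\<in>systematic_code n A. dual_swap n \<pi> (map uminus (dual_swap n \<pi> v)) = v"
    using \<pi> by (simp add: systematic_code_def dual_swap_dual_swap flip: dual_swap_uminus)
  show "\<forall>v\<in>systematic_dual n A. dual_swap n \<pi> (dual_swap n \<pi> (map uminus v)) = v"
    using \<pi> by (simp add: systematic_dual_def dual_swap_dual_swap)
  show "dual_swap n \<pi> ` systematic_code n A \<subseteq> systematic_dual n A"
    using dual_swap_systematic_code[OF assms] by blast
  show "(\<lambda>v. dual_swap n \<pi> (map uminus v)) ` systematic_dual n A \<subseteq> systematic_code n A"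
    using dual_swap_systematic_dual[OF assms] by blast
qed

theorem formally_self_dual_systematic:
  assumes "transposed_by_involution n A \<pi>"
  shows "formally_self_dual_R (2 * n) (systematic_code n A)"
  unfolding formally_self_dual_R_def dual_systematic_code
proof (intro conjI allI)
  show "linear_code_R (2 * n) (systematic_code n A)"
    using linear_code_generated by (simp flip: generated_id_concat)
  note \<pi> = transposed_by_involutionD(1)[OF assms]
  fix w
  show "card {c \<in> systematic_code n A. lee_wt_R c = w} =
          card {c \<in> systematic_dual n A. lee_wt_R c = w}"
    by (rule card_weight_class_bij[OF bij_betw_dual_swap[OF assms]])
       (simp add: systematic_code_def lee_wt_dual_swap[OF \<pi>])
qed

definition gray_dual :: "R list \<Rightarrow> 4 list" where
  "gray_dual v = map (\<lambda>x. - snd x) v @ map (\<lambda>x. fst x + snd x) v"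

lemma length_gray [simp]: "length (gray v) = 2 * length v"
  by (simp add: gray_def)

lemma length_gray_dual [simp]: "length (gray_dual v) = 2 * length v"
  by (simp add: gray_dual_def)

lemma lee_wt_gray: "lee_wt_Z4 (gray v) = lee_wt_R v"
  by (simp add: gray_def lee_wt_Z4_def lee_wt_R_def lee_R_def[abs_def] sum_list_addf o_def)

lemma lee_wt_gray_dual: "lee_wt_Z4 (gray_dual v) = lee_wt_R v"
  by (simp add: gray_dual_def lee_wt_Z4_def lee_wt_R_def lee_R_def[abs_def] sum_list_addf o_def)

lemma inj_gray: "inj gray"
  by (rule inj_on_inverseI[where g="\<lambda>z. map2 (\<lambda>b c. (c - b, b)) (take (length z div 2) z) (drop (length z div 2) z)"])
     (simp add: gray_def map2_map_map)

lemma gray_dual_inverse: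
  "length z = 2 * N \<Longrightarrow> gray_dual (map2 (\<lambda>p q. (p + q, - p)) (take N z) (drop N z)) = z"
  by (rule nth_equalityI) (auto simp: gray_dual_def nth_append)

lemma inj_gray_dual: "inj gray_dual"
  by (rule inj_on_inverseI[where g="\<lambda>z. map2 (\<lambda>p q. (p + q, - p)) (take (length z div 2) z) (drop (length z div 2) z)"])
     (simp add: gray_dual_def map2_map_map)

lemma inner_gray_gray_dual:
  assumes "length x = length y"
  shows "sum_list (map2 (*) (gray x) (gray_dual y)) =
           fst (sum_list (map2 rmul x y)) + snd (sum_list (map2 rmul x y))"
  using assms by (simp add: gray_def gray_dual_def sum_list_map2_eq_sum fst_sum snd_sum rmul_def
      sum.distrib[symmetric] algebra_simps)

lemma inner_rmul_left: "sum_list (map2 rmul (map (rmul r) x) y) = rmul r (sum_list (map2 rmul x y))"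
  by (induct x y rule: list_induct2') (simp_all add: rmul_add_right rmul_assoc)

lemma gray_add: "length x = length y \<Longrightarrow> map2 (+) (gray x) (gray y) = gray (map2 (+) x y)"
  by (rule nth_equalityI) (auto simp: gray_def nth_append)

lemma gray_scale: "map ((*) r) (gray x) = gray (map (rmul (r, 0)) x)"
  by (simp add: gray_def rmul_def o_def distrib_left)

lemma linear_code_gray:
  assumes "linear_code_R N C"
  shows "linear_code_Z4 (2 * N) (gray ` C)"
proof -
  have len: "\<And>x. x \<in> C \<Longrightarrow> length x = N" and "C \<noteq> {}"
    and add: "\<And>x y. x \<in> C \<Longrightarrow> y \<in> C \<Longrightarrow> map2 (+) x y \<in> C"
    and scale: "\<And>r x. x \<in> C \<Longrightarrow> map (rmul r) x \<in> C"
    using assms by (auto simp: linear_code_R_def)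
  have "map2 (+) (gray x) (gray y) \<in> gray ` C" if "x \<in> C" "y \<in> C" for x y
    using add[OF that] by (simp add: gray_add len that)
  moreover have "map ((*) r) (gray x) \<in> gray ` C" if "x \<in> C" for r x
    using scale[OF that] by (simp add: gray_scale)
  ultimately show ?thesis
    using len \<open>C \<noteq> {}\<close> unfolding linear_code_Z4_def by auto
qed

lemma dual_gray_image:
  assumes lin: "linear_code_R N C"
  shows "dual_Z4 (2 * N) (gray ` C) = gray_dual ` dual_R N C"
proof (intro equalityI subsetI)
  have len: "\<And>x. x \<in> C \<Longrightarrow> length x = N"
    using lin by (auto simp: linear_code_R_def)
  fix z assume "z \<in> dual_Z4 (2 * N) (gray ` C)"
  then have z: "length z = 2 * N"
    and orth: "\<And>x. x \<in> C \<Longrightarrow> sum_list (map2 (*) (gray x) z) = 0"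
    by (auto simp: dual_Z4_def)
  define y where "y = map2 (\<lambda>p q. (p + q, - p)) (take N z) (drop N z)"
  have gray_dual_y: "gray_dual y = z"
    using gray_dual_inverse[OF z] by (simp add: y_def)
  have y: "length y = N"
    using z by (simp add: y_def)
  have inner: "fst (sum_list (map2 rmul x y)) + snd (sum_list (map2 rmul x y)) = 0" if "x \<in> C" for x
    using orth[OF that] inner_gray_gray_dual[of x y] len[OF that] y gray_dual_y by simp
  have "sum_list (map2 rmul x y) = 0" if "x \<in> C" for x
  proof -
    \<comment> \<open>u x pairs with y to u times the inner product, which isolates its first component\<close>
    have "map (rmul (0, 1)) x \<in> C"
      using lin that by (simp add: linear_code_R_def)
    from inner[OF this] inner[OF that] show ?thesis
      by (simp add: inner_rmul_left rmul_u_left prod_eq_iff)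
  qed
  with y have "y \<in> dual_R N C"
    by (simp add: dual_R_def)
  with gray_dual_y show "z \<in> gray_dual ` dual_R N C"
    by blast
next
  fix z assume "z \<in> gray_dual ` dual_R N C"
  then obtain y where "z = gray_dual y" and "length y = N"
    and "\<And>x. x \<in> C \<Longrightarrow> sum_list (map2 rmul x y) = 0"
    by (auto simp: dual_R_def)
  moreover have "\<And>x. x \<in> C \<Longrightarrow> length x = N"
    using lin by (auto simp: linear_code_R_def)
  ultimately show "z \<in> dual_Z4 (2 * N) (gray ` C)"
    by (auto simp: dual_Z4_def inner_gray_gray_dual)
qed

theorem formally_self_dual_gray:
  assumes fsd: "formally_self_dual_R N C"
  shows "formally_self_dual_Z4 (2 * N) (gray ` C)"
proof -
  have lin: "linear_code_R N C"
    using fsd by (simp add: formally_self_dual_R_def)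
  have "card {c \<in> gray ` C. lee_wt_Z4 c = w} =
          card {c \<in> dual_Z4 (2 * N) (gray ` C). lee_wt_Z4 c = w}" for w
  proof -
    have "card {c \<in> C. lee_wt_R c = w} = card {c \<in> gray ` C. lee_wt_Z4 c = w}"
      by (rule card_weight_class_bij[OF inj_on_imp_bij_betw[OF inj_on_subset[OF inj_gray subset_UNIV]]])
         (simp add: lee_wt_gray)
    moreover have "card {c \<in> dual_R N C. lee_wt_R c = w} =
                     card {c \<in> gray_dual ` dual_R N C. lee_wt_Z4 c = w}"
      by (rule card_weight_class_bij[OF inj_on_imp_bij_betw[OF inj_on_subset[OF inj_gray_dual subset_UNIV]]])
         (simp add: lee_wt_gray_dual)
    ultimately show ?thesis
      using fsd by (simp add: formally_self_dual_R_def dual_gray_image[OF lin])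
  qed
  with linear_code_gray[OF lin] show ?thesis
    by (simp add: formally_self_dual_Z4_def)
qed

lemma symmetric_transposed_by_id:
  "symmetric_mat n A \<Longrightarrow> transposed_by_involution n A (\<lambda>i. i)"
  by (simp add: transposed_by_involution_def symmetric_mat_def)

lemma circulant_entry:
  assumes "circulant_mat n A" and "i < n" and "j < n"
  shows "A i j = A 0 ((j + n - i) mod n)"
  using assms(2,3)
proof (induct i arbitrary: j)
  case 0
  then show ?case by simp
next
  case (Suc i)
  define j' where "j' = (if j = 0 then n - 1 else j - 1)"
  have "j' < n" and "(j' + 1) mod n = j"
    using Suc.prems by (auto simp: j'_def)
  then have "A (Suc i) j = A i j'"
    using assms(1) Suc.prems unfolding circulant_mat_def by (metis Suc_eq_plus1)
  also have "\<dots> = A 0 ((j' + n - i) mod n)"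
    using Suc \<open>j' < n\<close> by simp
  also have "(j' + n - i) mod n = (j + n - Suc i) mod n"
  proof (cases "j = 0")
    case True
    then have "j' + n - i = (n - Suc i) + n"
      using Suc.prems by (simp add: j'_def)
    then show ?thesis
      using True by simp
  qed (simp add: j'_def)
  finally show ?case .
qed

lemma circulant_transposed_by_negation:
  assumes "circulant_mat n A"
  shows "transposed_by_involution n A (\<lambda>i. (n - i) mod n)"
  unfolding transposed_by_involution_def
proof (intro conjI allI impI)
  fix i j assume "i < n"
  then show "(n - i) mod n < n" and "(n - (n - i) mod n) mod n = i"
    by (auto simp: mod_if)
  assume "j < n"
  have neg: "(n - k) mod n = (if k = 0 then 0 else n - k)" if "k < n" for k
    using that by simp
  have "n - j + n - (n - i) = i + n - j"
    using \<open>i < n\<close> \<open>j < n\<close> by arith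
  then have shift: "((n - j) mod n + n - (n - i) mod n) mod n = (i + n - j) mod n"
    using \<open>i < n\<close> \<open>j < n\<close> by (simp add: neg)
  have "A ((n - i) mod n) ((n - j) mod n) = A 0 (((n - j) mod n + n - (n - i) mod n) mod n)"
    using \<open>i < n\<close> by (intro circulant_entry[OF assms]) auto
  also have "\<dots> = A j i"
    unfolding shift using \<open>i < n\<close> \<open>j < n\<close> by (intro circulant_entry[OF assms, symmetric])
  finally show "A ((n - i) mod n) ((n - j) mod n) = A j i" .
qed

theorem corollary5p3:
  fixes n :: nat and A :: "nat \<Rightarrow> nat \<Rightarrow> R" and C :: "R list set"
  assumes "C = generated_code_R n (2 * n) (id_concat n A)"
    and "symmetric_mat n A \<or> circulant_mat n A"
  shows "formally_self_dual_R (2 * n) C \<and> formally_self_dual_Z4 (4 * n) (gray ` C)"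
proof -
  obtain \<pi> where "transposed_by_involution n A \<pi>"
    using assms(2) symmetric_transposed_by_id circulant_transposed_by_negation by blast
  then have "formally_self_dual_R (2 * n) C"
    using assms(1) formally_self_dual_systematic by (simp add: generated_id_concat)
  with formally_self_dual_gray[of "2 * n" C] show ?thesis
    by simp
qed

end
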